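(* Let $C_H>0$, $c_H>0$ and $\theta\in(0,1)$, and set $\Theta=\theta\,\frac{1-e^{-c_H}}{1+e^{-c_H}}$. Let $y=(y_j)_{j\in\mathbb N}\in\ell^\infty(\mathbb N)$ have nonnegative entries and satisfy $$\forall j\in\mathbb N,\quad y_j\le C_He^{-c_Hj}+\Theta\sum_{k=0}^{+\infty}e^{-c_H|j-1-k|}y_k.$$ Then $y_j\le\rho r^j$ for all $j\in\mathbb N$, where $$r=\cosh(c_H)-2\sinh\!\left(\tfrac{c_H}{2}\right)\sqrt{\cosh^2\!\left(\tfrac{c_H}{2}\right)-\theta}\in\,]e^{-c_H},1[\quad\text{and}\quad \rho=\frac{C_H}{\Theta}(r-e^{-c_H})>0.$$ *)

theory Defs
  imports "HOL-Analysis.Analysis"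
begin

end

theory Submission
  imports Defs
begin

text \<open>
  Write \<open>a = exp (-c_H)\<close> and \<open>K\<close> for the transform with kernel \<open>a\<^bsup>|j-1-k|\<^esup>\<close>.
  \<open>K\<close> maps \<open>r\<^sup>k\<close> to an explicit combination of \<open>r\<^sup>j\<close> and \<open>a\<^sup>j\<close>, and when \<open>r\<close> solves
  \<open>(r - a)(1 - a r) = \<theta> (1 - a)\<^sup>2\<close> the sequence \<open>\<rho> r\<^sup>j\<close> satisfies the hypothesis with equality.
  The difference \<open>d = y - \<rho> r\<^sup>j\<close> is then bounded with \<open>d \<le> \<Theta> K d\<close>. Since \<open>K\<close> maps the
  constant \<open>1\<close> to at most \<open>(1 + a)/(1 - a)\<close>, any bound \<open>M > 0\<close> of \<open>d\<close> would improve to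
  \<open>\<theta> M < M\<close>; hence \<open>sup d \<le> 0\<close>.
\<close>

definition kernel_transform :: "real \<Rightarrow> (nat \<Rightarrow> real) \<Rightarrow> nat \<Rightarrow> real" where
  "kernel_transform c w j = (\<Sum>k. exp (- c * \<bar>real j - 1 - real k\<bar>) * w k)"

lemma exp_kernel_below:
  assumes "k < j"
  shows "exp (- c * \<bar>real j - 1 - real k\<bar>) = exp (- c) ^ (j - Suc k)"
proof -
  have "\<bar>real j - 1 - real k\<bar> = real (j - Suc k)"
    using assms by (simp add: of_nat_diff)
  then show ?thesis by (simp only: exp_of_nat2_mult)
qed

lemma exp_kernel_above: "exp (- c * \<bar>real j - 1 - real (m + j)\<bar>) = exp (- c) ^ Suc m"
proof -
  have "\<bar>real j - 1 - real (m + j)\<bar> = real (Suc m)" by simp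
  then show ?thesis by (simp only: exp_of_nat2_mult)
qed

lemma summable_exp_kernel:
  fixes w :: "nat \<Rightarrow> real"
  assumes "c > 0" and "\<And>k. \<bar>w k\<bar> \<le> B"
  shows "summable (\<lambda>k. exp (- c * \<bar>real j - 1 - real k\<bar>) * w k)"
proof -
  have "summable (\<lambda>m. B * exp (- c) ^ Suc m)"
    using \<open>c > 0\<close> by (intro summable_mult summable_Suc_iff[THEN iffD2]) simp
  then have "summable (\<lambda>m. exp (- c * \<bar>real j - 1 - real (m + j)\<bar>) * w (m + j))"
  proof (rule summable_comparison_test')
    show "norm (exp (- c * \<bar>real j - 1 - real (m + j)\<bar>) * w (m + j)) \<le> B * exp (- c) ^ Suc m"
      for m
      unfolding exp_kernel_above using assms(2)[of "m + j"]
      by (simp add: abs_mult mult.commute mult_left_mono)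
  qed
  then show ?thesis
    using summable_iff_shift[of _ j] by blast
qed

lemma summable_exp_kernel_bounded:
  fixes w :: "nat \<Rightarrow> real"
  assumes "c > 0" and "bounded (range w)"
  shows "summable (\<lambda>k. exp (- c * \<bar>real j - 1 - real k\<bar>) * w k)"
proof -
  obtain B where "\<And>k. \<bar>w k\<bar> \<le> B"
    using assms(2) unfolding bounded_iff by auto
  then show ?thesis by (rule summable_exp_kernel[OF \<open>c > 0\<close>])
qed

lemma kernel_transform_diff:
  assumes "c > 0" and "bounded (range w)" and "bounded (range v)"
  shows "kernel_transform c (\<lambda>k. w k - v k) j = kernel_transform c w j - kernel_transform c v j"
  unfolding kernel_transform_def right_diff_distrib
  by (rule suminf_diff[symmetric]; intro summable_exp_kernel_bounded assms)

lemma kernel_transform_power: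
  fixes r :: real
  assumes "c > 0" and "\<bar>r\<bar> \<le> 1" and "r \<noteq> exp (- c)"
  shows "kernel_transform c (\<lambda>k. r ^ k) j
     = (r ^ j - exp (- c) ^ j) / (r - exp (- c)) + exp (- c) * r ^ j / (1 - exp (- c) * r)"
proof -
  define a where "a = exp (- c)"
  have "0 < a" "a < 1" unfolding a_def using \<open>c > 0\<close> by auto
  then have ar: "\<bar>a * r\<bar> < 1"
    using \<open>\<bar>r\<bar> \<le> 1\<close> by (simp add: abs_mult) (smt (verit) mult_left_le)
  have "summable (\<lambda>k. exp (- c * \<bar>real j - 1 - real k\<bar>) * r ^ k)"
    by (rule summable_exp_kernel[OF \<open>c > 0\<close>, of _ 1])
      (use \<open>\<bar>r\<bar> \<le> 1\<close> in \<open>simp add: power_abs power_le_one\<close>)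
  then have "kernel_transform c (\<lambda>k. r ^ k) j
      = (\<Sum>m. exp (- c * \<bar>real j - 1 - real (m + j)\<bar>) * r ^ (m + j))
        + (\<Sum>k<j. exp (- c * \<bar>real j - 1 - real k\<bar>) * r ^ k)"
    unfolding kernel_transform_def by (rule suminf_split_initial_segment)
  also have "(\<Sum>m. exp (- c * \<bar>real j - 1 - real (m + j)\<bar>) * r ^ (m + j))
      = (\<Sum>m. (a * r ^ j) * (a * r) ^ m)"
    unfolding exp_kernel_above a_def by (simp add: power_add power_mult_distrib mult_ac)
  also have "\<dots> = a * r ^ j / (1 - a * r)"
    using ar by (simp add: suminf_mult suminf_geometric)
  also have "(\<Sum>k<j. exp (- c * \<bar>real j - 1 - real k\<bar>) * r ^ k) = (\<Sum>k<j. a ^ (j - Suc k) * r ^ k)"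
    by (intro sum.cong refl, subst exp_kernel_below) (auto simp: a_def)
  also have "\<dots> = (r ^ j - a ^ j) / (r - a)"
    using power_diff_sumr2[of r j a] \<open>r \<noteq> exp (- c)\<close> unfolding a_def by simp
  finally show ?thesis unfolding a_def by simp
qed

lemma kernel_transform_le_const:
  assumes "c > 0" and "bounded (range w)" and "\<And>k. w k \<le> M" and "M \<ge> 0"
  shows "kernel_transform c w j \<le> (1 + exp (- c)) / (1 - exp (- c)) * M"
proof -
  define a where "a = exp (- c)"
  have "0 < a" "a < 1" unfolding a_def using \<open>c > 0\<close> by auto
  have "kernel_transform c w j \<le> kernel_transform c (\<lambda>k. M * 1 ^ k) j"
    unfolding kernel_transform_def
    by (intro suminf_le mult_left_mono assms(3) summable_exp_kernel_bounded assms(1,2)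
        summable_exp_kernel[OF assms(1), of _ M]) (use assms(3,4) in auto)
  also have "\<dots> = M * kernel_transform c (\<lambda>k. 1 ^ k) j"
  proof -
    have "summable (\<lambda>k. exp (- c * \<bar>real j - 1 - real k\<bar>) * 1 ^ k)"
      by (rule summable_exp_kernel[OF assms(1), of _ 1]) simp
    from suminf_mult[OF this, of M] show ?thesis
      unfolding kernel_transform_def by (simp add: mult_ac)
  qed
  also have "kernel_transform c (\<lambda>k. 1 ^ k) j = (1 - a ^ j + a) / (1 - a)"
    using \<open>a < 1\<close> by (subst kernel_transform_power[OF \<open>c > 0\<close>]) (auto simp: a_def add_divide_distrib)
  also have "M * \<dots> \<le> M * ((1 + a) / (1 - a))"
    using \<open>0 < a\<close> \<open>a < 1\<close> \<open>M \<ge> 0\<close> by (intro mult_left_mono divide_right_mono) auto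
  finally show ?thesis by (simp add: a_def mult.commute)
qed

lemma decay_rate_root:
  fixes c \<theta> :: real
  assumes "c > 0" and "0 < \<theta>" and "\<theta> < 1"
  defines "r \<equiv> cosh c - 2 * sinh (c / 2) * sqrt ((cosh (c / 2))\<^sup>2 - \<theta>)"
  shows "exp (- c) < r" and "r < 1"
    and "(r - exp (- c)) * (1 - exp (- c) * r) = \<theta> * (1 - exp (- c))\<^sup>2"
proof -
  define ch sh a where "ch = cosh (c / 2)" and "sh = sinh (c / 2)" and "a = exp (- c)"
  define q where "q = sqrt (ch\<^sup>2 - \<theta>)"
  have "sh > 0" and "ch > 0" and pyth: "ch\<^sup>2 = sh\<^sup>2 + 1"
    unfolding ch_def sh_def using \<open>c > 0\<close> by (simp_all add: cosh_square_eq)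
  have r_eq: "r = ch\<^sup>2 + sh\<^sup>2 - 2 * sh * q"
    using cosh_double[of "c / 2"] unfolding r_def ch_def sh_def q_def by simp
  have a_eq: "a = (ch - sh)\<^sup>2"
    unfolding a_def ch_def sh_def cosh_minus_sinh
    by (simp flip: exp_of_nat2_mult)
  have "ch\<^sup>2 - \<theta> > 0"
    using pyth \<open>\<theta> < 1\<close> by (smt (verit) zero_le_power2)
  then have q2: "q\<^sup>2 = ch\<^sup>2 - \<theta>" and "q \<ge> 0"
    unfolding q_def by simp_all
  have "sh < q"
    by (rule power2_less_imp_less) (use q2 pyth \<open>\<theta> < 1\<close> \<open>q \<ge> 0\<close> in auto)
  have "q < ch"
    by (rule power2_less_imp_less) (use q2 \<open>0 < \<theta>\<close> \<open>ch > 0\<close> in auto)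
  have r_minus_a: "r - a = 2 * sh * (ch - q)"
    unfolding r_eq a_eq by (simp add: power2_eq_square algebra_simps)
  have one_minus_r: "1 - r = 2 * sh * (q - sh)"
    unfolding r_eq using pyth by (simp add: power2_eq_square algebra_simps)
  show "exp (- c) < r" "r < 1"
    using r_minus_a one_minus_r \<open>sh > 0\<close> \<open>sh < q\<close> \<open>q < ch\<close> unfolding a_def
    by (smt (verit) mult_pos_pos)+
  have "1 - a = 2 * sh * (ch - sh)"
    unfolding a_eq using pyth by (simp add: power2_eq_square algebra_simps)
  moreover have "1 - a * r = 2 * sh * (ch - sh)\<^sup>2 * (ch + q)"
    unfolding a_eq r_eq using pyth by algebra
  ultimately show "(r - exp (- c)) * (1 - exp (- c) * r) = \<theta> * (1 - exp (- c))\<^sup>2"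
    using r_minus_a q2 unfolding a_def[symmetric] by algebra
qed

lemma kernel_transform_geometric_fixed_point:
  fixes C \<Theta> \<rho> r :: real
  assumes "c > 0" and "exp (- c) < r" and "r < 1"
    and root: "\<Theta> * (1 - (exp (- c))\<^sup>2) = (r - exp (- c)) * (1 - exp (- c) * r)"
    and scale: "\<Theta> * \<rho> = C * (r - exp (- c))"
  shows "C * exp (- c) ^ j + \<Theta> * kernel_transform c (\<lambda>k. \<rho> * r ^ k) j = \<rho> * r ^ j"
proof -
  define a where "a = exp (- c)"
  note root = root[folded a_def] and scale = scale[folded a_def]
  have "0 < a" "a < r" "r < 1" unfolding a_def using assms(2,3) by simp_all
  then have "0 < r" and "a * r < 1"
    using mult_strict_mono[of a 1 r 1] by simp_all
  with \<open>a < r\<close> have "r \<noteq> a" and "(r - a) * (1 - a * r) > 0"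
    by simp_all
  have "summable (\<lambda>k. exp (- c * \<bar>real j - 1 - real k\<bar>) * r ^ k)"
    by (rule summable_exp_kernel[OF \<open>c > 0\<close>, of _ 1])
      (use \<open>0 < r\<close> \<open>r < 1\<close> in \<open>simp add: power_le_one\<close>)
  then have "kernel_transform c (\<lambda>k. \<rho> * r ^ k) j = \<rho> * kernel_transform c (\<lambda>k. r ^ k) j"
    unfolding kernel_transform_def by (subst suminf_mult[symmetric]) (simp_all add: mult_ac)
  also have "kernel_transform c (\<lambda>k. r ^ k) j = (r ^ j - a ^ j) / (r - a) + a * r ^ j / (1 - a * r)"
    unfolding a_def
    by (rule kernel_transform_power) (use \<open>c > 0\<close> \<open>0 < r\<close> \<open>r < 1\<close> \<open>r \<noteq> a\<close> in \<open>auto simp: a_def\<close>)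
  finally have "C * a ^ j + \<Theta> * kernel_transform c (\<lambda>k. \<rho> * r ^ k) j
      = C * a ^ j + C * (r - a) * ((r ^ j - a ^ j) / (r - a) + a * r ^ j / (1 - a * r))"
    by (simp only: mult.assoc[symmetric] scale)
  also have "\<dots> = C * r ^ j + C * (r - a) * (a * r ^ j / (1 - a * r))"
  proof -
    have "C * a ^ j + C * (r - a) * ((r ^ j - a ^ j) / (r - a) + X) = C * r ^ j + C * (r - a) * X"
      for X using \<open>r \<noteq> a\<close> by (simp add: field_simps)
    then show ?thesis .
  qed
  also have "\<dots> = C * (1 - a\<^sup>2) / (1 - a * r) * r ^ j"
    using \<open>a * r < 1\<close> by (simp add: field_simps power2_eq_square)
  also have "C * (1 - a\<^sup>2) / (1 - a * r) = \<rho>"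
  proof -
    have "\<Theta> * (\<rho> * (1 - a * r)) = C * ((r - a) * (1 - a * r))"
      by (simp only: mult.assoc[symmetric] scale)
    also have "\<dots> = \<Theta> * (C * (1 - a\<^sup>2))"
      by (simp only: root[symmetric] mult.left_commute)
    finally have "\<rho> * (1 - a * r) = C * (1 - a\<^sup>2)"
      using root \<open>(r - a) * (1 - a * r) > 0\<close> by auto
    then show ?thesis
      using \<open>a * r < 1\<close> by (simp add: field_simps)
  qed
  finally show ?thesis unfolding a_def .
qed

lemma kernel_subsolution_nonpos:
  fixes d :: "nat \<Rightarrow> real"
  assumes "c > 0" and "bounded (range d)" and "\<Theta> \<ge> 0"
    and contraction: "\<Theta> * (1 + exp (- c)) < 1 - exp (- c)"
    and sub: "\<And>j. d j \<le> \<Theta> * kernel_transform c d j"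
  shows "d j \<le> 0"
proof -
  define q where "q = \<Theta> * ((1 + exp (- c)) / (1 - exp (- c)))"
  have "exp (- c) < 1" using \<open>c > 0\<close> by simp
  then have "q < 1"
    using contraction unfolding q_def by (simp add: field_simps)
  define M where "M = (SUP k. d k)"
  have "bdd_above (range d)"
    using assms(2) by (rule bounded_imp_bdd_above)
  then have d_le_M: "d k \<le> M" for k
    unfolding M_def by (simp add: cSUP_upper)
  have "M \<le> 0"
  proof (rule ccontr)
    assume "\<not> M \<le> 0"
    then have "M > 0" by simp
    have "d k \<le> q * M" for k
    proof -
      have "d k \<le> \<Theta> * kernel_transform c d k" by (rule sub)
      also have "\<dots> \<le> \<Theta> * ((1 + exp (- c)) / (1 - exp (- c)) * M)"
        using kernel_transform_le_const[OF \<open>c > 0\<close> assms(2) d_le_M] \<open>M > 0\<close> \<open>\<Theta> \<ge> 0\<close>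
        by (intro mult_left_mono) auto
      finally show ?thesis unfolding q_def by (simp add: mult.assoc)
    qed
    then have "M \<le> q * M"
      unfolding M_def by (intro cSUP_least) auto
    with \<open>q < 1\<close> \<open>M > 0\<close> show False
      by (simp add: mult_le_cancel_right1)
  qed
  then show ?thesis using d_le_M[of j] by linarith
qed

lemma kernel_inequality_le_geometric:
  fixes C \<Theta> r :: real and y :: "nat \<Rightarrow> real"
  assumes "c > 0" and "exp (- c) < r" and "r < 1" and "\<Theta> > 0"
    and root: "\<Theta> * (1 - (exp (- c))\<^sup>2) = (r - exp (- c)) * (1 - exp (- c) * r)"
    and contraction: "\<Theta> * (1 + exp (- c)) < 1 - exp (- c)"
    and "bounded (range y)"
    and y_le: "\<And>j. y j \<le> C * exp (- c) ^ j + \<Theta> * kernel_transform c y j"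
  shows "y j \<le> C / \<Theta> * (r - exp (- c)) * r ^ j"
proof -
  define \<rho> where "\<rho> = C / \<Theta> * (r - exp (- c))"
  define z where "z k = \<rho> * r ^ k" for k
  have "0 < r"
    using \<open>exp (- c) < r\<close> exp_gt_zero[of "- c"] by linarith
  have fixed_point: "C * exp (- c) ^ j + \<Theta> * kernel_transform c z j = z j" for j
    unfolding z_def
    by (rule kernel_transform_geometric_fixed_point[OF assms(1-3) root])
      (use \<open>\<Theta> > 0\<close> in \<open>simp add: \<rho>_def\<close>)
  have "bounded (range z)"
    unfolding z_def bounded_iff using \<open>0 < r\<close> \<open>r < 1\<close>
    by (intro exI[of _ "\<bar>\<rho>\<bar>"]) (auto simp: abs_mult power_le_one mult_left_le)
  have "y j - z j \<le> 0"
  proof (rule kernel_subsolution_nonpos[OF \<open>c > 0\<close> _ _ contraction])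
    show "bounded (range (\<lambda>k. y k - z k))"
      using \<open>bounded (range y)\<close> \<open>bounded (range z)\<close> by (rule bounded_minus_comp)
    show "y j - z j \<le> \<Theta> * kernel_transform c (\<lambda>k. y k - z k) j" for j
      using y_le[of j] fixed_point[of j]
        kernel_transform_diff[OF \<open>c > 0\<close> \<open>bounded (range y)\<close> \<open>bounded (range z)\<close>]
      by (simp add: right_diff_distrib)
  qed (use \<open>\<Theta> > 0\<close> in simp)
  then show ?thesis unfolding z_def \<rho>_def by simp
qed

theorem lemma3p5:
  fixes C_H c_H \<theta> :: real and y :: "nat \<Rightarrow> real"
  assumes "C_H > 0" and "c_H > 0" and "0 < \<theta>" and "\<theta> < 1"
    and "bounded (range y)"
    and "\<And>j. y j \<ge> 0"
    and "\<And>j. y j \<le> C_H * exp (- c_H * real j)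
           + (\<theta> * (1 - exp (- c_H)) / (1 + exp (- c_H)))
             * (\<Sum>k. exp (- c_H * \<bar>real j - 1 - real k\<bar>) * y k)"
  shows "let \<Theta> = \<theta> * (1 - exp (- c_H)) / (1 + exp (- c_H));
             r = cosh c_H - 2 * sinh (c_H / 2) * sqrt ((cosh (c_H / 2))\<^sup>2 - \<theta>);
             \<rho> = C_H / \<Theta> * (r - exp (- c_H))
         in exp (- c_H) < r \<and> r < 1 \<and> \<rho> > 0 \<and> (\<forall>j. y j \<le> \<rho> * r ^ j)"
proof -
  define a \<Theta> r where "a = exp (- c_H)" and "\<Theta> = \<theta> * (1 - a) / (1 + a)"
    and "r = cosh c_H - 2 * sinh (c_H / 2) * sqrt ((cosh (c_H / 2))\<^sup>2 - \<theta>)"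
  have "a < r" "r < 1" and root: "(r - a) * (1 - a * r) = \<theta> * (1 - a)\<^sup>2"
    using decay_rate_root[OF \<open>c_H > 0\<close> \<open>0 < \<theta>\<close> \<open>\<theta> < 1\<close>] unfolding a_def r_def by simp_all
  have "0 < a" "a < 1" unfolding a_def using \<open>c_H > 0\<close> by simp_all
  then have "\<Theta> > 0" and \<Theta>_a: "\<Theta> * (1 + a) = \<theta> * (1 - a)"
    unfolding \<Theta>_def using \<open>0 < \<theta>\<close> by simp_all
  have "\<Theta> * (1 - a\<^sup>2) = \<Theta> * (1 + a) * (1 - a)"
    by (simp add: power2_eq_square algebra_simps)
  also have "\<dots> = (r - a) * (1 - a * r)"
    unfolding \<Theta>_a root by (simp add: power2_eq_square)
  finally have root_\<Theta>: "\<Theta> * (1 - a\<^sup>2) = (r - a) * (1 - a * r)" .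
  have contraction: "\<Theta> * (1 + a) < 1 - a"
    unfolding \<Theta>_a using \<open>\<theta> < 1\<close> \<open>a < 1\<close> by simp
  have y_le: "y j \<le> C_H * a ^ j + \<Theta> * kernel_transform c_H y j" for j
    using assms(7)[of j] unfolding kernel_transform_def a_def \<Theta>_def exp_of_nat2_mult .
  have "y j \<le> C_H / \<Theta> * (r - a) * r ^ j" for j
    using kernel_inequality_le_geometric[OF \<open>c_H > 0\<close>, folded a_def,
        OF \<open>a < r\<close> \<open>r < 1\<close> \<open>\<Theta> > 0\<close> root_\<Theta> contraction \<open>bounded (range y)\<close> y_le] .
  moreover have "C_H / \<Theta> * (r - a) > 0"
    using \<open>C_H > 0\<close> \<open>\<Theta> > 0\<close> \<open>a < r\<close> by simp
  ultimately show ?thesis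
    unfolding Let_def using \<open>a < r\<close> \<open>r < 1\<close> by (simp add: a_def \<Theta>_def r_def)
qed

end
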